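(* Consider the discrete second-price auction. In the model with ties, the unique equilibrium is the profile in which every player uses $\beta(v)=v$ for all $v\in X$. In the model without ties, the set of equilibria is precisely the set of strategy profiles in which every player $i$ uses a bidding function with $\beta_i(v)\in\{v,\,v+\delta\}\cap X$ for every $v\in X$ (i.e. each player bids either their valuation or their valuation plus $\delta$).
   Context: Model. There are $n\ge 2$ risk-neutral bidders competing for one indivisible object. Fix $\delta>0$ and $x\in\mathbb N$ and let $X=\{0,\delta,2\delta,\dots,x\delta\}$. Each bidder $i$ privately learns a value $v_i\in X$; values are drawn independently across bidders and every element of $X$ has strictly positive probability. Each bidder submits a bid $b_i\in X$. A (pure) strategy of bidder $i$ is a bidding function $\beta_i:X\to X$. Tie rules: in the model without ties, bidder $i$ wins iff $b_i>b_j$ for all $j\neq i$ (if the highest bid is tied, nobody wins); in the model with ties, if $m$ bidders submit the highest bid, each of them wins with probability $1/m$. In the second-price auction the winner receives the object and pays the highest bid among the other bidders; payoff is value minus payment if winning and $0$ otherwise. An equilibrium is a profile of bidding functions such that each bidder's bidding function maximises their expected payoff given the others' bidding functions (a pure-strategy Bayes–Nash equilibrium) and such that no bidder uses a weakly dominated bidding function (a bidding function is weakly dominated if some other bidding function yields at least as high expected payoff against every profile of opponents' bidding functions, and strictly higher against some). *)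

theory Defs
  imports Main "HOL-Library.FuncSet" Complex_Main
begin

text \<open>The flag ties selects the model: True = model with ties (uniform random
  tie-breaking among the highest bidders), False = model without ties
  (a tied highest bid means nobody wins).\<close>

definition grid :: "real \<Rightarrow> nat \<Rightarrow> real set" where
  "grid \<delta> x = (\<lambda>k. real k * \<delta>) ` {0..x}"

definition bidfun :: "real \<Rightarrow> nat \<Rightarrow> (real \<Rightarrow> real) \<Rightarrow> bool" where
  "bidfun \<delta> x \<beta> \<longleftrightarrow> (\<forall>v\<in>grid \<delta> x. \<beta> v \<in> grid \<delta> x)"

definition profile :: "nat \<Rightarrow> real \<Rightarrow> nat \<Rightarrow> (nat \<Rightarrow> real \<Rightarrow> real) \<Rightarrow> bool" where
  "profile n \<delta> x b \<longleftrightarrow> (\<forall>i<n. bidfun \<delta> x (b i))"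

definition win_prob :: "bool \<Rightarrow> nat \<Rightarrow> nat \<Rightarrow> (nat \<Rightarrow> real) \<Rightarrow> real" where
  "win_prob ties n i bids =
     (if ties then
        (if (\<forall>j<n. bids j \<le> bids i)
         then 1 / real (card {j. j < n \<and> bids j = bids i}) else 0)
      else
        (if (\<forall>j<n. j \<noteq> i \<longrightarrow> bids j < bids i) then 1 else 0))"

definition price :: "nat \<Rightarrow> nat \<Rightarrow> (nat \<Rightarrow> real) \<Rightarrow> real" where
  "price n i bids = Max {bids j | j. j < n \<and> j \<noteq> i}"

definition ex_post_payoff :: "bool \<Rightarrow> nat \<Rightarrow> nat \<Rightarrow> real \<Rightarrow> (nat \<Rightarrow> real) \<Rightarrow> real" where
  "ex_post_payoff ties n i v bids = win_prob ties n i bids * (v - price n i bids)"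

text \<open>Expected payoff of bidder i under profile b, where p j w is the probability
  that bidder j has value w (values independent across bidders).\<close>
definition exp_payoff ::
  "bool \<Rightarrow> nat \<Rightarrow> real \<Rightarrow> nat \<Rightarrow> (nat \<Rightarrow> real \<Rightarrow> real) \<Rightarrow> nat \<Rightarrow> (nat \<Rightarrow> real \<Rightarrow> real) \<Rightarrow> real" where
  "exp_payoff ties n \<delta> x p i b =
     (\<Sum>vs\<in>Pi\<^sub>E {..<n} (\<lambda>_. grid \<delta> x).
        (\<Prod>j<n. p j (vs j)) * ex_post_payoff ties n i (vs i) (\<lambda>j. b j (vs j)))"

definition best_response ::
  "bool \<Rightarrow> nat \<Rightarrow> real \<Rightarrow> nat \<Rightarrow> (nat \<Rightarrow> real \<Rightarrow> real) \<Rightarrow> nat \<Rightarrow> (nat \<Rightarrow> real \<Rightarrow> real) \<Rightarrow> bool" where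
  "best_response ties n \<delta> x p i b \<longleftrightarrow>
     (\<forall>\<beta>'. bidfun \<delta> x \<beta>' \<longrightarrow> exp_payoff ties n \<delta> x p i (b(i := \<beta>')) \<le> exp_payoff ties n \<delta> x p i b)"

definition weakly_dominated ::
  "bool \<Rightarrow> nat \<Rightarrow> real \<Rightarrow> nat \<Rightarrow> (nat \<Rightarrow> real \<Rightarrow> real) \<Rightarrow> nat \<Rightarrow> (real \<Rightarrow> real) \<Rightarrow> bool" where
  "weakly_dominated ties n \<delta> x p i \<beta> \<longleftrightarrow>
     (\<exists>\<beta>'. bidfun \<delta> x \<beta>' \<and>
        (\<forall>b. profile n \<delta> x b \<longrightarrow>
            exp_payoff ties n \<delta> x p i (b(i := \<beta>')) \<ge> exp_payoff ties n \<delta> x p i (b(i := \<beta>))) \<and>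
        (\<exists>b. profile n \<delta> x b \<and>
            exp_payoff ties n \<delta> x p i (b(i := \<beta>')) > exp_payoff ties n \<delta> x p i (b(i := \<beta>))))"

definition equilibrium ::
  "bool \<Rightarrow> nat \<Rightarrow> real \<Rightarrow> nat \<Rightarrow> (nat \<Rightarrow> real \<Rightarrow> real) \<Rightarrow> (nat \<Rightarrow> real \<Rightarrow> real) \<Rightarrow> bool" where
  "equilibrium ties n \<delta> x p b \<longleftrightarrow>
     (\<forall>i<n. best_response ties n \<delta> x p i b \<and> \<not> weakly_dominated ties n \<delta> x p i (b i))"

end

theory Submission
  imports Defs
begin

text \<open>Ex post, bidder i with value v never gets more than max 0 (v - m), m the highest opposing
  bid. Against grid-valued opposing bids this bound is attained exactly by the bid v (with ties),
  resp. by v or v + \<delta> (without ties), because no grid point lies strictly between v and v + \<delta>.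
  Any other bid strictly misses the bound when all opponents bid a suitable common d, an event of
  positive probability under the constant profile d. So the optimal bids are weakly dominant,
  every other bidding function is weakly dominated by truthful bidding, and the equilibria are
  exactly the profiles of optimal bids.\<close>

definition optimal_bid :: "bool \<Rightarrow> real \<Rightarrow> nat \<Rightarrow> real \<Rightarrow> real \<Rightarrow> bool" where
  "optimal_bid ties \<delta> x v c \<longleftrightarrow> (if ties then c = v else c \<in> {v, v + \<delta>} \<inter> grid \<delta> x)"

lemma finite_grid: "finite (grid \<delta> x)"
  unfolding grid_def by simp

lemma grid_lessE:
  assumes "\<delta> > 0" "a \<in> grid \<delta> x" "b \<in> grid \<delta> x" "a < b"
  obtains k l where "a = real k * \<delta>" "b = real l * \<delta>" "k < l" "l \<le> x"
proof -
  obtain k where k: "a = real k * \<delta>" using assms(2) unfolding grid_def by force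
  obtain l where l: "b = real l * \<delta>" "l \<le> x" using assms(3) unfolding grid_def by force
  have "k < l" using assms(1,4) k l by (simp add: mult_less_cancel_right)
  then show ?thesis using that k l by blast
qed

lemma grid_less_imp_add_le:
  assumes "\<delta> > 0" "a \<in> grid \<delta> x" "b \<in> grid \<delta> x" "a < b"
  shows "a + \<delta> \<le> b"
proof -
  obtain k l where kl: "a = real k * \<delta>" "b = real l * \<delta>" "k < l"
    using grid_lessE[OF assms] by blast
  have "real (k + 1) * \<delta> \<le> real l * \<delta>"
    using assms(1) kl(3) by (intro mult_right_mono) simp_all
  then show ?thesis using kl by (simp add: algebra_simps)
qed

lemma grid_less_imp_add_in:
  assumes "\<delta> > 0" "a \<in> grid \<delta> x" "b \<in> grid \<delta> x" "a < b"
  shows "a + \<delta> \<in> grid \<delta> x"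
proof -
  obtain k l where kl: "a = real k * \<delta>" "k < l" "l \<le> x"
    using grid_lessE[OF assms] by blast
  have "a + \<delta> = real (k + 1) * \<delta>" using kl by (simp add: algebra_simps)
  moreover have "k + 1 \<in> {0..x}" using kl by simp
  ultimately show ?thesis unfolding grid_def by blast
qed

lemma price_bids_finite:
  fixes n i :: nat
  shows "finite {bids j | j. j < n \<and> j \<noteq> i}"
proof (rule finite_image_set)
  show "finite {j. j < n \<and> j \<noteq> i}" by (rule finite_subset[of _ "{..<n}"]) auto
qed

lemma price_attained:
  assumes "n \<ge> 2" "i < n"
  obtains j where "j < n" "j \<noteq> i" "bids j = price n i bids"
proof -
  let ?j = "if i = 0 then 1 else 0 :: nat"
  have "?j < n" "?j \<noteq> i" using assms by auto
  then have "{bids j | j. j < n \<and> j \<noteq> i} \<noteq> {}" by blast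
  then have "price n i bids \<in> {bids j | j. j < n \<and> j \<noteq> i}"
    unfolding price_def using price_bids_finite by (intro Max_in)
  then obtain j where "j < n" "j \<noteq> i" "bids j = price n i bids" by auto
  then show ?thesis by (rule that)
qed

lemma price_ge_other_bid:
  assumes "j < n" "j \<noteq> i"
  shows "bids j \<le> price n i bids"
  unfolding price_def using price_bids_finite assms by (intro Max_ge) blast+

lemma price_cong:
  assumes "\<And>j. j \<noteq> i \<Longrightarrow> f j = g j"
  shows "price n i f = price n i g"
proof -
  have "{f j |j. j < n \<and> j \<noteq> i} = {g j |j. j < n \<and> j \<noteq> i}" using assms by force
  then show ?thesis unfolding price_def by simp
qed

lemma price_const:
  assumes "n \<ge> 2" "i < n" "\<forall>j<n. j \<noteq> i \<longrightarrow> bids j = d"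
  shows "price n i bids = d"
  using price_attained[OF assms(1,2), of bids] assms(3) by metis

lemma win_prob_bounds:
  assumes "i < n"
  shows "0 \<le> win_prob ties n i bids" "win_prob ties n i bids \<le> 1"
proof -
  have "finite {j. j < n \<and> bids j = bids i}" by simp
  moreover have "i \<in> {j. j < n \<and> bids j = bids i}" using assms by simp
  ultimately have "card {j. j < n \<and> bids j = bids i} \<ge> 1"
    by (metis One_nat_def Suc_leI card_gt_0_iff empty_iff)
  then show "0 \<le> win_prob ties n i bids" "win_prob ties n i bids \<le> 1"
    unfolding win_prob_def by auto
qed

lemma ex_post_payoff_le_surplus:
  assumes "i < n"
  shows "ex_post_payoff ties n i v bids \<le> max 0 (v - price n i bids)"
proof (cases "v - price n i bids \<ge> 0")
  case True
  then have "win_prob ties n i bids * (v - price n i bids) \<le> 1 * (v - price n i bids)"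
    using win_prob_bounds[OF assms] by (intro mult_right_mono) auto
  then show ?thesis unfolding ex_post_payoff_def by simp
next
  case False
  then have "win_prob ties n i bids * (v - price n i bids) \<le> 0"
    using win_prob_bounds[OF assms] by (intro mult_nonneg_nonpos) auto
  then show ?thesis unfolding ex_post_payoff_def by simp
qed

lemma ex_post_payoff_optimal_bid:
  assumes "\<delta> > 0" "n \<ge> 2" "i < n" "v \<in> grid \<delta> x"
    and others: "\<forall>j<n. j \<noteq> i \<longrightarrow> bids j \<in> grid \<delta> x"
    and opt: "optimal_bid ties \<delta> x v (bids i)"
  shows "ex_post_payoff ties n i v bids = max 0 (v - price n i bids)"
proof -
  let ?m = "price n i bids"
  obtain j0 where j0: "j0 < n" "j0 \<noteq> i" "bids j0 = ?m"
    using price_attained[OF assms(2,3)] by blast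
  have m_grid: "?m \<in> grid \<delta> x" using others j0 by metis
  have le_m: "\<And>j. j < n \<Longrightarrow> j \<noteq> i \<Longrightarrow> bids j \<le> ?m" by (rule price_ge_other_bid)
  consider "?m < v" | "?m = v" | "?m > v" by linarith
  then show ?thesis
  proof cases
    case 1
    have "win_prob ties n i bids = 1"
    proof (cases ties)
      case True
      then have bi: "bids i = v" using opt by (simp add: optimal_bid_def)
      have "{j. j < n \<and> bids j = bids i} = {i}" using le_m 1 bi assms(3) by force
      moreover have "\<forall>j<n. bids j \<le> bids i" using le_m 1 bi by force
      ultimately show ?thesis using True by (simp add: win_prob_def)
    next
      case False
      then have "bids i \<ge> v" using opt assms(1) by (auto simp: optimal_bid_def)
      then have "\<forall>j<n. j \<noteq> i \<longrightarrow> bids j < bids i" using le_m 1 by force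
      then show ?thesis using False by (simp add: win_prob_def)
    qed
    then show ?thesis using 1 by (simp add: ex_post_payoff_def)
  next
    case 2
    then show ?thesis by (simp add: ex_post_payoff_def)
  next
    case 3
    have "v + \<delta> \<le> ?m" using grid_less_imp_add_le[OF assms(1,4) m_grid 3] .
    then have "bids i \<le> ?m" "ties \<longrightarrow> bids i < ?m"
      using opt 3 by (auto simp: optimal_bid_def split: if_splits)
    then have "win_prob ties n i bids = 0" using j0 unfolding win_prob_def by force
    then show ?thesis using 3 by (simp add: ex_post_payoff_def)
  qed
qed

lemma ex_post_payoff_suboptimal_bid:
  assumes "\<delta> > 0" "n \<ge> 2" "i < n" "v \<in> grid \<delta> x" "c \<in> grid \<delta> x"
    and subopt: "\<not> optimal_bid ties \<delta> x v c"
  obtains d where "d \<in> grid \<delta> x"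
    "\<And>bids. \<forall>j<n. j \<noteq> i \<longrightarrow> bids j = d \<Longrightarrow> bids i = c \<Longrightarrow>
       ex_post_payoff ties n i v bids < max 0 (v - d)"
proof (cases ties)
  case True
  \<comment> \<open>Opponents bidding c force a tie among all n bidders, so only the share 1/n of v - c is realised.\<close>
  have "c \<noteq> v" using True subopt by (simp add: optimal_bid_def)
  show ?thesis
  proof (rule that[OF assms(5)])
    fix bids :: "nat \<Rightarrow> real"
    assume o: "\<forall>j<n. j \<noteq> i \<longrightarrow> bids j = c" and bi: "bids i = c"
    have all: "\<forall>j<n. bids j = c" using o bi by metis
    then have "{j. j < n \<and> bids j = bids i} = {..<n}" using bi by auto
    then have "ex_post_payoff ties n i v bids = (v - c) / real n"
      using True all bi price_const[OF assms(2,3) o] by (simp add: win_prob_def ex_post_payoff_def)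
    moreover have "(v - c) / real n < max 0 (v - c)"
      using \<open>c \<noteq> v\<close> assms(2) by (cases "v > c") (simp_all add: divide_less_eq divide_less_0_iff)
    ultimately show "ex_post_payoff ties n i v bids < max 0 (v - c)" by simp
  qed
next
  case False
  then have c: "c \<noteq> v" "c \<noteq> v + \<delta>" using subopt assms(5) by (auto simp: optimal_bid_def)
  show ?thesis
  proof (cases "c < v")
    case True
    \<comment> \<open>Underbidding: opponents bidding c force a tie, which nobody wins.\<close>
    show ?thesis
    proof (rule that[OF assms(5)])
      fix bids :: "nat \<Rightarrow> real"
      assume o: "\<forall>j<n. j \<noteq> i \<longrightarrow> bids j = c" and bi: "bids i = c"
      obtain j0 where "j0 < n" "j0 \<noteq> i" using price_attained[OF assms(2,3)] by blast
      then have "win_prob ties n i bids = 0" using False o bi by (force simp: win_prob_def)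
      then show "ex_post_payoff ties n i v bids < max 0 (v - c)"
        using True by (simp add: ex_post_payoff_def)
    qed
  next
    case False
    \<comment> \<open>Overbidding by more than \<delta>: opponents bidding v + \<delta> make bidder i win at a loss.\<close>
    then have "v < c" using c by simp
    then have "v + \<delta> \<le> c" and vd: "v + \<delta> \<in> grid \<delta> x"
      using grid_less_imp_add_le[OF assms(1,4,5)] grid_less_imp_add_in[OF assms(1,4,5)] by auto
    then have lt: "v + \<delta> < c" using c by simp
    show ?thesis
    proof (rule that[OF vd])
      fix bids :: "nat \<Rightarrow> real"
      assume o: "\<forall>j<n. j \<noteq> i \<longrightarrow> bids j = v + \<delta>" and bi: "bids i = c"
      have "win_prob ties n i bids = 1" using \<open>\<not> ties\<close> o bi lt by (simp add: win_prob_def)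
      then show "ex_post_payoff ties n i v bids < max 0 (v - (v + \<delta>))"
        using price_const[OF assms(2,3) o] assms(1) by (simp add: ex_post_payoff_def)
    qed
  qed
qed

definition surplus_bound ::
  "nat \<Rightarrow> real \<Rightarrow> nat \<Rightarrow> (nat \<Rightarrow> real \<Rightarrow> real) \<Rightarrow> nat \<Rightarrow> (nat \<Rightarrow> real \<Rightarrow> real) \<Rightarrow> real" where
  "surplus_bound n \<delta> x p i b =
     (\<Sum>vs\<in>Pi\<^sub>E {..<n} (\<lambda>_. grid \<delta> x).
        (\<Prod>j<n. p j (vs j)) * max 0 (vs i - price n i (\<lambda>j. b j (vs j))))"

lemma value_prob_pos:
  fixes p :: "nat \<Rightarrow> real \<Rightarrow> real"
  assumes "\<forall>j<n. \<forall>w\<in>grid \<delta> x. p j w > 0" "vs \<in> Pi\<^sub>E {..<n} (\<lambda>_. grid \<delta> x)"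
  shows "0 < (\<Prod>j<n. p j (vs j))"
  by (rule prod_pos) (use assms in \<open>auto simp: PiE_iff\<close>)

lemma weighted_payoff_le_surplus:
  fixes p :: "nat \<Rightarrow> real \<Rightarrow> real"
  assumes "\<forall>j<n. \<forall>w\<in>grid \<delta> x. p j w > 0" "i < n" "vs \<in> Pi\<^sub>E {..<n} (\<lambda>_. grid \<delta> x)"
  shows "(\<Prod>j<n. p j (vs j)) * ex_post_payoff ties n i (vs i) (\<lambda>j. (b(i := \<beta>)) j (vs j))
      \<le> (\<Prod>j<n. p j (vs j)) * max 0 (vs i - price n i (\<lambda>j. b j (vs j)))"
proof -
  have "price n i (\<lambda>j. (b(i := \<beta>)) j (vs j)) = price n i (\<lambda>j. b j (vs j))"
    by (rule price_cong) simp
  then show ?thesis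
    using ex_post_payoff_le_surplus[OF assms(2), of ties "vs i" "\<lambda>j. (b(i := \<beta>)) j (vs j)"]
      value_prob_pos[OF assms(1,3)]
    by (intro mult_left_mono) auto
qed

lemma exp_payoff_le_surplus_bound:
  assumes "\<forall>j<n. \<forall>w\<in>grid \<delta> x. p j w > 0" "i < n"
  shows "exp_payoff ties n \<delta> x p i (b(i := \<beta>)) \<le> surplus_bound n \<delta> x p i b"
  unfolding exp_payoff_def surplus_bound_def
  by (rule sum_mono) (rule weighted_payoff_le_surplus[OF assms])

lemma exp_payoff_optimal_bids:
  assumes "\<delta> > 0" "n \<ge> 2" "i < n" "profile n \<delta> x b"
    and opt: "\<forall>w\<in>grid \<delta> x. optimal_bid ties \<delta> x w (\<beta> w)"
  shows "exp_payoff ties n \<delta> x p i (b(i := \<beta>)) = surplus_bound n \<delta> x p i b"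
  unfolding exp_payoff_def surplus_bound_def
proof (rule sum.cong[OF refl])
  fix vs assume "vs \<in> Pi\<^sub>E {..<n} (\<lambda>_. grid \<delta> x)"
  then have vs: "\<And>j. j < n \<Longrightarrow> vs j \<in> grid \<delta> x" by (auto simp: PiE_iff)
  have "ex_post_payoff ties n i (vs i) (\<lambda>j. (b(i := \<beta>)) j (vs j))
      = max 0 (vs i - price n i (\<lambda>j. (b(i := \<beta>)) j (vs j)))"
    using assms(4) vs opt vs[OF assms(3)] unfolding profile_def bidfun_def
    by (intro ex_post_payoff_optimal_bid[OF assms(1-3)]) auto
  moreover have "price n i (\<lambda>j. (b(i := \<beta>)) j (vs j)) = price n i (\<lambda>j. b j (vs j))"
    by (rule price_cong) simp
  ultimately show "(\<Prod>j<n. p j (vs j)) * ex_post_payoff ties n i (vs i) (\<lambda>j. (b(i := \<beta>)) j (vs j))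
      = (\<Prod>j<n. p j (vs j)) * max 0 (vs i - price n i (\<lambda>j. b j (vs j)))" by simp
qed

lemma exp_payoff_suboptimal_bid_less:
  assumes "\<delta> > 0" "n \<ge> 2" "i < n" "\<forall>j<n. \<forall>w\<in>grid \<delta> x. p j w > 0"
    and "v \<in> grid \<delta> x" "\<beta> v \<in> grid \<delta> x" "\<not> optimal_bid ties \<delta> x v (\<beta> v)"
  obtains d where "d \<in> grid \<delta> x"
    "exp_payoff ties n \<delta> x p i ((\<lambda>_ _. d)(i := \<beta>)) < surplus_bound n \<delta> x p i (\<lambda>_ _. d)"
proof -
  obtain d where d: "d \<in> grid \<delta> x" and loss: "\<And>bids. \<forall>j<n. j \<noteq> i \<longrightarrow> bids j = d \<Longrightarrow>
      bids i = \<beta> v \<Longrightarrow> ex_post_payoff ties n i v bids < max 0 (v - d)"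
    using ex_post_payoff_suboptimal_bid[OF assms(1-3,5-7)] by blast
  let ?A = "Pi\<^sub>E {..<n} (\<lambda>_. grid \<delta> x)"
  let ?vs = "restrict (\<lambda>_. v) {..<n}"
  have "?vs \<in> ?A" using assms(5) by auto
  have "ex_post_payoff ties n i v (\<lambda>j. ((\<lambda>_ _. d)(i := \<beta>)) j (?vs j)) < max 0 (v - d)"
    using assms(3) by (intro loss) auto
  moreover have "price n i (\<lambda>j. d) = d" by (rule price_const[OF assms(2,3)]) auto
  ultimately have strict: "(\<Prod>j<n. p j (?vs j)) * ex_post_payoff ties n i (?vs i) (\<lambda>j. ((\<lambda>_ _. d)(i := \<beta>)) j (?vs j))
      < (\<Prod>j<n. p j (?vs j)) * max 0 (?vs i - price n i (\<lambda>j. (\<lambda>_ _. d) j (?vs j)))"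
    using value_prob_pos[OF assms(4) \<open>?vs \<in> ?A\<close>] assms(3) by (intro mult_strict_left_mono) auto
  have "exp_payoff ties n \<delta> x p i ((\<lambda>_ _. d)(i := \<beta>)) < surplus_bound n \<delta> x p i (\<lambda>_ _. d)"
    unfolding exp_payoff_def surplus_bound_def
  proof (rule sum_strict_mono_ex1)
    show "finite ?A" by (simp add: finite_PiE finite_grid)
  qed (use \<open>?vs \<in> ?A\<close> strict weighted_payoff_le_surplus[OF assms(4,3)] in blast)+
  then show ?thesis using that d by blast
qed

lemma optimal_bid_self: "v \<in> grid \<delta> x \<Longrightarrow> optimal_bid ties \<delta> x v v"
  by (simp add: optimal_bid_def)

lemma best_response_if_optimal_bids:
  assumes "\<delta> > 0" "n \<ge> 2" "i < n" "\<forall>j<n. \<forall>w\<in>grid \<delta> x. p j w > 0" "profile n \<delta> x b"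
    and "\<forall>w\<in>grid \<delta> x. optimal_bid ties \<delta> x w (b i w)"
  shows "best_response ties n \<delta> x p i b"
  unfolding best_response_def
  using exp_payoff_le_surplus_bound[OF assms(4,3)] exp_payoff_optimal_bids[OF assms(1-3,5,6)]
  by simp

lemma not_weakly_dominated_if_optimal_bids:
  assumes "\<delta> > 0" "n \<ge> 2" "i < n" "\<forall>j<n. \<forall>w\<in>grid \<delta> x. p j w > 0"
    and opt: "\<forall>w\<in>grid \<delta> x. optimal_bid ties \<delta> x w (\<beta> w)"
  shows "\<not> weakly_dominated ties n \<delta> x p i \<beta>"
proof
  assume "weakly_dominated ties n \<delta> x p i \<beta>"
  then obtain \<beta>' b where "profile n \<delta> x b"
    and "exp_payoff ties n \<delta> x p i (b(i := \<beta>')) > exp_payoff ties n \<delta> x p i (b(i := \<beta>))"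
    unfolding weakly_dominated_def by blast
  then show False
    using exp_payoff_le_surplus_bound[OF assms(4,3), of ties b \<beta>']
      exp_payoff_optimal_bids[OF assms(1-3) _ opt, of b p] by simp
qed

lemma weakly_dominated_if_suboptimal_bid:
  assumes "\<delta> > 0" "n \<ge> 2" "i < n" "\<forall>j<n. \<forall>w\<in>grid \<delta> x. p j w > 0"
    and "v \<in> grid \<delta> x" "\<beta> v \<in> grid \<delta> x" "\<not> optimal_bid ties \<delta> x v (\<beta> v)"
  shows "weakly_dominated ties n \<delta> x p i \<beta>"
proof -
  have truthful: "\<forall>w\<in>grid \<delta> x. optimal_bid ties \<delta> x w ((\<lambda>w. w) w)"
    by (simp add: optimal_bid_self)
  obtain d where d: "d \<in> grid \<delta> x" and
    "exp_payoff ties n \<delta> x p i ((\<lambda>_ _. d)(i := \<beta>)) < surplus_bound n \<delta> x p i (\<lambda>_ _. d)"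
    using exp_payoff_suboptimal_bid_less[where \<beta> = \<beta>, OF assms] by blast
  moreover have "profile n \<delta> x (\<lambda>_ _. d)" using d by (simp add: profile_def bidfun_def)
  ultimately have "\<exists>b. profile n \<delta> x b \<and>
      exp_payoff ties n \<delta> x p i (b(i := (\<lambda>w. w))) > exp_payoff ties n \<delta> x p i (b(i := \<beta>))"
    using exp_payoff_optimal_bids[OF assms(1-3) _ truthful] by auto
  moreover have "exp_payoff ties n \<delta> x p i (b(i := \<beta>)) \<le> exp_payoff ties n \<delta> x p i (b(i := (\<lambda>w. w)))"
    if "profile n \<delta> x b" for b
    using exp_payoff_le_surplus_bound[OF assms(4,3)] exp_payoff_optimal_bids[OF assms(1-3) that truthful]
    by simp
  moreover have "bidfun \<delta> x (\<lambda>w. w)" by (simp add: bidfun_def)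
  ultimately show ?thesis unfolding weakly_dominated_def by blast
qed

lemma equilibrium_iff_optimal_bids:
  assumes "\<delta> > 0" "n \<ge> 2" "\<forall>j<n. \<forall>w\<in>grid \<delta> x. p j w > 0" "profile n \<delta> x b"
  shows "equilibrium ties n \<delta> x p b \<longleftrightarrow> (\<forall>i<n. \<forall>v\<in>grid \<delta> x. optimal_bid ties \<delta> x v (b i v))"
proof
  assume eq: "equilibrium ties n \<delta> x p b"
  show "\<forall>i<n. \<forall>v\<in>grid \<delta> x. optimal_bid ties \<delta> x v (b i v)"
  proof (intro allI impI ballI, rule ccontr)
    fix i v assume i: "i < n" and "v \<in> grid \<delta> x" "\<not> optimal_bid ties \<delta> x v (b i v)"
    moreover have "b i v \<in> grid \<delta> x"
      using assms(4) i \<open>v \<in> grid \<delta> x\<close> unfolding profile_def bidfun_def by blast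
    ultimately have "weakly_dominated ties n \<delta> x p i (b i)"
      by (intro weakly_dominated_if_suboptimal_bid[OF assms(1,2) i assms(3)])
    then show False using eq i unfolding equilibrium_def by blast
  qed
next
  assume "\<forall>i<n. \<forall>v\<in>grid \<delta> x. optimal_bid ties \<delta> x v (b i v)"
  then show "equilibrium ties n \<delta> x p b"
    unfolding equilibrium_def
    using best_response_if_optimal_bids[OF assms(1,2) _ assms(3,4)]
      not_weakly_dominated_if_optimal_bids[OF assms(1,2) _ assms(3)]
    by blast
qed

theorem proposition1:
  fixes n x :: nat and \<delta> :: real and p :: "nat \<Rightarrow> real \<Rightarrow> real"
  assumes "n \<ge> 2" and "\<delta> > 0"
    and "\<forall>i<n. \<forall>v\<in>grid \<delta> x. p i v > 0"
    and "\<forall>i<n. (\<Sum>v\<in>grid \<delta> x. p i v) = 1"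
  shows "(\<forall>b. profile n \<delta> x b \<longrightarrow>
            (equilibrium True n \<delta> x p b \<longleftrightarrow> (\<forall>i<n. \<forall>v\<in>grid \<delta> x. b i v = v)))
       \<and> (\<forall>b. profile n \<delta> x b \<longrightarrow>
            (equilibrium False n \<delta> x p b \<longleftrightarrow>
               (\<forall>i<n. \<forall>v\<in>grid \<delta> x. b i v \<in> {v, v + \<delta>} \<inter> grid \<delta> x)))"
  using equilibrium_iff_optimal_bids[OF assms(2,1,3), of _ True]
    equilibrium_iff_optimal_bids[OF assms(2,1,3), of _ False]
  by (simp add: optimal_bid_def)

end
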